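(* Let $\{S(t)\}_{t\ge0}$ be a semigroup on a complete metric space $(X,d)$ and let $B\subseteq X$ be a positively invariant bounded set. Let $\varphi:\mathbb{R}^+\to\mathbb{R}^+$ satisfy $\varphi(t)\to0$ as $t\to+\infty$, and let $T>0$. Suppose that for every $t\ge T$ and every $\epsilon>0$ there exists a function $\Phi_{t,\epsilon}:X\times X\to\mathbb{R}^+$ which is contractive on $B\times B$, i.e. $$\liminf_{m\to\infty}\liminf_{n\to\infty}\Phi_{t,\epsilon}(y_n,y_m)=0\quad\text{for every sequence }\{y_n\}\subseteq B,$$ and such that $$d(S(t)y_1,S(t)y_2)\le\varphi(t)+\epsilon+\Phi_{t,\epsilon}(y_1,y_2)\quad\forall y_1,y_2\in B .$$ Then $\alpha(S(t)B)\le3\varphi(t)$ for all $t\ge T$.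
   Context: A semigroup $\{S(t)\}_{t\ge0}$ on $X$ is a family of continuous maps $S(t):X\to X$ with $S(0)=I$, $S(t+s)=S(t)S(s)$. $B$ positively invariant means $S(t)B\subseteq B$ for all $t\ge0$. $\alpha$ is the Kuratowski measure of noncompactness, $\alpha(B)=\inf\{\delta>0:B\text{ has a finite cover by sets of diameter}<\delta\}$. *)

theory Defs
  imports "HOL-Analysis.Analysis"
begin

definition kuratowski_alpha :: "'a::metric_space set \<Rightarrow> real" where
  "kuratowski_alpha A = Inf {\<delta>. \<delta> > 0 \<and> (\<exists>F. finite F \<and> A \<subseteq> \<Union>F \<and>
       (\<forall>C\<in>F. bounded C \<and> diameter C < \<delta>))}"

definition semigroup_on :: "(real \<Rightarrow> 'a::topological_space \<Rightarrow> 'a) \<Rightarrow> bool" where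
  "semigroup_on S \<longleftrightarrow> (\<forall>t\<ge>0. continuous_on UNIV (S t)) \<and> S 0 = id \<and>
     (\<forall>t\<ge>0. \<forall>s\<ge>0. S (t + s) = S t \<circ> S s)"

definition positively_invariant :: "(real \<Rightarrow> 'a \<Rightarrow> 'a) \<Rightarrow> 'a set \<Rightarrow> bool" where
  "positively_invariant S B \<longleftrightarrow> (\<forall>t\<ge>0. S t ` B \<subseteq> B)"

definition contractive_on :: "'a set \<Rightarrow> ('a \<Rightarrow> 'a \<Rightarrow> real) \<Rightarrow> bool" where
  "contractive_on B \<Phi> \<longleftrightarrow> (\<forall>y::nat \<Rightarrow> 'a. (\<forall>n. y n \<in> B) \<longrightarrow>
     liminf (\<lambda>m. liminf (\<lambda>n. ereal (\<Phi> (y n) (y m)))) = 0)"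

end

theory Submission
  imports Defs
begin

text \<open>
  If \<open>S(t)B\<close> had no finite net of radius \<open>\<phi>(t) + 2\<epsilon>\<close>, one could choose greedily a sequence
  \<open>y\<^sub>n\<close> in \<open>B\<close> whose images are pairwise more than \<open>\<phi>(t) + 2\<epsilon>\<close> apart. Contractivity of
  \<open>\<Phi>\<^sub>t\<^sub>,\<^sub>\<epsilon>\<close> yields indices \<open>m < n\<close> with \<open>\<Phi>\<^sub>t\<^sub>,\<^sub>\<epsilon>(y\<^sub>n, y\<^sub>m) < \<epsilon>\<close>, contradicting the estimate on
  \<open>d(S(t)y\<^sub>n, S(t)y\<^sub>m)\<close>. So for every \<open>r > \<phi>(t)\<close> the set \<open>S(t)B\<close> is covered by finitely many
  balls of radius \<open>r\<close>, which even gives \<open>\<alpha>(S(t)B) \<le> 2\<phi>(t)\<close>.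
\<close>

lemma diameter_cball_le:
  fixes x :: "'a::metric_space"
  assumes "0 \<le> r"
  shows "diameter (cball x r) \<le> 2 * r"
proof -
  have "dist a b \<le> 2 * r" if "a \<in> cball x r" "b \<in> cball x r" for a b
    using that dist_triangle[of a b x] by (auto simp: dist_commute)
  then show ?thesis
    using assms by (auto simp: diameter_def intro!: cSUP_least)
qed

lemma kuratowski_alpha_le_of_finite_nets:
  fixes A :: "'a::metric_space set"
  assumes "c \<ge> 0"
    and nets: "\<And>r. r > c \<Longrightarrow> \<exists>F. finite F \<and> A \<subseteq> (\<Union>x\<in>F. cball x r)"
  shows "kuratowski_alpha A \<le> 2 * c"
proof -
  define D where "D = {\<delta>. \<delta> > 0 \<and> (\<exists>F. finite F \<and> A \<subseteq> \<Union>F \<and>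
       (\<forall>C\<in>F. bounded C \<and> diameter C < \<delta>))}"
  have "\<delta> \<in> D" if "\<delta> > 2 * c" for \<delta>
  proof -
    define r where "r = (\<delta> + 2 * c) / 4"
    have "r > c" "2 * r < \<delta>"
      using that by (simp_all add: r_def)
    then obtain F where "finite F" "A \<subseteq> (\<Union>x\<in>F. cball x r)"
      using nets by blast
    moreover have "bounded C \<and> diameter C < \<delta>" if C: "C \<in> (\<lambda>x. cball x r) ` F" for C
    proof -
      obtain x where "C = cball x r"
        using C by blast
      then show ?thesis
        using diameter_cball_le[of r x] \<open>r > c\<close> \<open>2 * r < \<delta>\<close> \<open>c \<ge> 0\<close> by auto
    qed
    moreover have "\<delta> > 0"
      using that \<open>c \<ge> 0\<close> by linarith
    ultimately show ?thesis
      unfolding D_def by (intro CollectI conjI exI[of _ "(\<lambda>x. cball x r) ` F"] finite_imageI) auto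
  qed
  moreover have "bdd_below D"
    unfolding D_def by (rule bdd_belowI[of _ 0]) auto
  moreover have "{2 * c<..} \<noteq> {}"
    using gt_ex[of "2 * c"] by blast
  ultimately have "Inf D \<le> Inf {2 * c<..}"
    by (intro cInf_superset_mono) auto
  then show ?thesis
    by (simp add: kuratowski_alpha_def D_def)
qed

lemma frequently_less_of_Liminf_less:
  fixes f :: "'b \<Rightarrow> 'c::complete_linorder"
  assumes "Liminf F f < c"
  shows "\<exists>\<^sub>F x in F. f x < c"
proof -
  obtain y where "y < c" "\<exists>\<^sub>F x in F. \<not> y < f x"
    using assms le_Liminf_iff[of c F f] not_eventually by (metis not_le)
  then show ?thesis
    by (elim frequently_elim1) (auto simp: not_less)
qed

lemma contractive_on_close_pair:
  fixes y :: "nat \<Rightarrow> 'b"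
  assumes "contractive_on B \<Phi>" "\<And>n. y n \<in> B" "e > 0"
  obtains m n where "m < n" "\<Phi> (y n) (y m) < e"
proof -
  have "liminf (\<lambda>m. liminf (\<lambda>n. ereal (\<Phi> (y n) (y m)))) < ereal e"
    using assms unfolding contractive_on_def by auto
  from frequently_ex[OF frequently_less_of_Liminf_less[OF this]]
  obtain m where "liminf (\<lambda>n. ereal (\<Phi> (y n) (y m))) < ereal e" ..
  then have "\<exists>\<^sub>F n in sequentially. ereal (\<Phi> (y n) (y m)) < ereal e"
    by (rule frequently_less_of_Liminf_less)
  then obtain n where "Suc m \<le> n" "\<Phi> (y n) (y m) < e"
    unfolding frequently_sequentially by auto
  then show ?thesis
    using that[of m n] by simp
qed

lemma greedy_separated_sequence:
  assumes extend: "\<And>F. finite F \<Longrightarrow> F \<subseteq> B \<Longrightarrow> \<exists>z\<in>B. \<forall>x\<in>F. R z x"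
  shows "\<exists>y :: nat \<Rightarrow> 'a. (\<forall>n. y n \<in> B) \<and> (\<forall>m n. m < n \<longrightarrow> R (y n) (y m))"
proof -
  obtain g where g: "\<And>F. finite F \<Longrightarrow> F \<subseteq> B \<Longrightarrow> g F \<in> B \<and> (\<forall>x\<in>F. R (g F) x)"
    using extend by metis
  define P where "P = rec_nat {} (\<lambda>_ Q. insert (g Q) Q)"
  have P_Suc: "P (Suc n) = insert (g (P n)) (P n)" for n
    by (simp add: P_def)
  have P: "finite (P n) \<and> P n \<subseteq> B" for n
    by (induction n) (simp_all add: P_def g)
  define y where "y n = g (P n)" for n
  have earlier_in_P: "y m \<in> P n" if "m < n" for m n
    using that by (induction n) (auto simp: P_Suc y_def less_Suc_eq)
  have "y n \<in> B" for n
    using g P unfolding y_def by blast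
  moreover have "R (y n) (y m)" if "m < n" for m n
    using g[of "P n"] P[of n] earlier_in_P[OF that] unfolding y_def by blast
  ultimately show ?thesis
    by blast
qed

lemma contractive_on_finite_net:
  fixes f :: "'b \<Rightarrow> 'a::metric_space"
  assumes contr: "contractive_on B \<Phi>"
    and estimate: "\<forall>y1\<in>B. \<forall>y2\<in>B. dist (f y1) (f y2) \<le> c + \<Phi> y1 y2"
    and "e > 0"
  shows "\<exists>F. finite F \<and> F \<subseteq> B \<and> f ` B \<subseteq> (\<Union>x\<in>F. cball (f x) (c + e))"
proof (rule ccontr)
  assume no_net: "\<nexists>F. finite F \<and> F \<subseteq> B \<and> f ` B \<subseteq> (\<Union>x\<in>F. cball (f x) (c + e))"
  have extend: "\<exists>z\<in>B. \<forall>x\<in>F. dist (f z) (f x) > c + e" if "finite F" "F \<subseteq> B" for F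
  proof -
    have "\<not> f ` B \<subseteq> (\<Union>x\<in>F. cball (f x) (c + e))"
      using no_net that by simp
    then obtain z where "z \<in> B" "f z \<notin> (\<Union>x\<in>F. cball (f x) (c + e))"
      unfolding image_subset_iff by blast
    then show ?thesis
      by (intro bexI[of _ z]) (auto simp: dist_commute not_le)
  qed
  from greedy_separated_sequence[OF extend] obtain y :: "nat \<Rightarrow> 'b" where y: "\<forall>n. y n \<in> B"
    and separated: "\<forall>m n. m < n \<longrightarrow> dist (f (y n)) (f (y m)) > c + e"
    by blast
  obtain m n where "m < n" "\<Phi> (y n) (y m) < e"
    using contractive_on_close_pair[OF contr y[rule_format] \<open>e > 0\<close>] .
  moreover have "dist (f (y n)) (f (y m)) \<le> c + \<Phi> (y n) (y m)"
    using estimate y by blast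
  moreover have "dist (f (y n)) (f (y m)) > c + e"
    using separated \<open>m < n\<close> by blast
  ultimately show False
    by linarith
qed

theorem theorem4p4:
  fixes S :: "real \<Rightarrow> 'a::complete_space \<Rightarrow> 'a"
    and B :: "'a set"
    and \<phi> :: "real \<Rightarrow> real"
    and \<Phi> :: "real \<Rightarrow> real \<Rightarrow> 'a \<Rightarrow> 'a \<Rightarrow> real"
    and T :: real
  assumes "semigroup_on S"
    and "positively_invariant S B"
    and "bounded B"
    and "\<forall>t\<ge>0. \<phi> t \<ge> 0"
    and "(\<phi> \<longlongrightarrow> 0) at_top"
    and "T > 0"
    and "\<forall>t\<ge>T. \<forall>\<epsilon>>0. (\<forall>x y. \<Phi> t \<epsilon> x y \<ge> 0) \<and> contractive_on B (\<Phi> t \<epsilon>) \<and>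
           (\<forall>y1\<in>B. \<forall>y2\<in>B. dist (S t y1) (S t y2) \<le> \<phi> t + \<epsilon> + \<Phi> t \<epsilon> y1 y2)"
  shows "\<forall>t\<ge>T. kuratowski_alpha (S t ` B) \<le> 3 * \<phi> t"
proof (intro allI impI)
  fix t assume "t \<ge> T"
  then have "\<phi> t \<ge> 0"
    using assms(4,6) by auto
  have "\<exists>F. finite F \<and> S t ` B \<subseteq> (\<Union>x\<in>F. cball x r)" if "r > \<phi> t" for r
  proof -
    define \<epsilon> where "\<epsilon> = (r - \<phi> t) / 2"
    have "\<epsilon> > 0" "r = (\<phi> t + \<epsilon>) + \<epsilon>"
      using that by (simp_all add: \<epsilon>_def)
    moreover have "contractive_on B (\<Phi> t \<epsilon>)"
      "\<forall>y1\<in>B. \<forall>y2\<in>B. dist (S t y1) (S t y2) \<le> (\<phi> t + \<epsilon>) + \<Phi> t \<epsilon> y1 y2"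
      using assms(7) \<open>t \<ge> T\<close> \<open>\<epsilon> > 0\<close> by auto
    ultimately obtain F where "finite F" "S t ` B \<subseteq> (\<Union>x\<in>F. cball (S t x) r)"
      using contractive_on_finite_net[of B "\<Phi> t \<epsilon>" "S t" "\<phi> t + \<epsilon>" \<epsilon>] by auto
    then show ?thesis
      by (intro exI[of _ "S t ` F"]) auto
  qed
  then have "kuratowski_alpha (S t ` B) \<le> 2 * \<phi> t"
    using kuratowski_alpha_le_of_finite_nets \<open>\<phi> t \<ge> 0\<close> by blast
  then show "kuratowski_alpha (S t ` B) \<le> 3 * \<phi> t"
    using \<open>\<phi> t \<ge> 0\<close> by linarith
qed

end
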